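(* Let $I$ be an ideal over an uncountable cardinal $\kappa$ such that $\mathcal{P}(\kappa)/I$ is complete, and let $\nu$ be a cardinal with $2^\nu<\kappa$. Then forcing with $\mathcal{P}(\kappa)/I\setminus\{[\emptyset]_I\}$ adds no new functions from $\nu$ to $2^\nu$.
   Context: An ideal over $\kappa$ means a proper, $\kappa$-complete ideal on $\mathcal{P}(\kappa)$ containing all singletons. The forcing notion $\mathcal{P}(\kappa)/I\setminus\{[\emptyset]_I\}$ is ordered by $[X]\leq[Y]$ iff $X\setminus Y\in I$. *)

theory Defs
  imports Main "HOL-Library.Countable_Set"
begin

text \<open>An ideal over kappa, where kappa is the cardinality of the carrier set K:
  a proper, kappa-complete ideal on Pow K containing all singletons.\<close>
definition ideal_over :: "'a set \<Rightarrow> 'a set set \<Rightarrow> bool" where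
  "ideal_over K I \<longleftrightarrow>
     I \<subseteq> Pow K \<and>
     (\<forall>X\<in>I. \<forall>Y. Y \<subseteq> X \<longrightarrow> Y \<in> I) \<and>
     (\<forall>F. F \<subseteq> I \<and> (card_of F, card_of K) \<in> ordLess \<longrightarrow> \<Union>F \<in> I) \<and>
     K \<notin> I \<and>
     (\<forall>x\<in>K. {x} \<in> I)"

definition eqI :: "'a set \<Rightarrow> 'a set set \<Rightarrow> ('a set \<times> 'a set) set" where
  "eqI K I = {(X, Y). X \<subseteq> K \<and> Y \<subseteq> K \<and> X - Y \<in> I \<and> Y - X \<in> I}"

definition cls :: "'a set \<Rightarrow> 'a set set \<Rightarrow> 'a set \<Rightarrow> 'a set set" where
  "cls K I X = eqI K I `` {X}"

definition quot_alg :: "'a set \<Rightarrow> 'a set set \<Rightarrow> 'a set set set" where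
  "quot_alg K I = Pow K // eqI K I"

definition leI :: "'a set \<Rightarrow> 'a set set \<Rightarrow> 'a set set \<Rightarrow> 'a set set \<Rightarrow> bool" where
  "leI K I a b \<longleftrightarrow> (\<exists>X Y. X \<subseteq> K \<and> Y \<subseteq> K \<and> a = cls K I X \<and> b = cls K I Y \<and> X - Y \<in> I)"

definition quot_complete :: "'a set \<Rightarrow> 'a set set \<Rightarrow> bool" where
  "quot_complete K I \<longleftrightarrow>
     (\<forall>A \<subseteq> quot_alg K I. \<exists>s \<in> quot_alg K I.
        (\<forall>a\<in>A. leI K I a s) \<and>
        (\<forall>t \<in> quot_alg K I. (\<forall>a\<in>A. leI K I a t) \<longrightarrow> leI K I s t))"

definition forcing_set :: "'a set \<Rightarrow> 'a set set \<Rightarrow> 'a set set set" where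
  "forcing_set K I = quot_alg K I - {cls K I {}}"

definition compat :: "'p set \<Rightarrow> ('p \<Rightarrow> 'p \<Rightarrow> bool) \<Rightarrow> 'p \<Rightarrow> 'p \<Rightarrow> bool" where
  "compat P le p q \<longleftrightarrow> (\<exists>r\<in>P. le r p \<and> le r q)"

definition antichain_below ::
  "'p set \<Rightarrow> ('p \<Rightarrow> 'p \<Rightarrow> bool) \<Rightarrow> 'p \<Rightarrow> 'p set \<Rightarrow> bool" where
  "antichain_below P le p A \<longleftrightarrow>
     A \<subseteq> {r\<in>P. le r p} \<and> (\<forall>r\<in>A. \<forall>s\<in>A. r \<noteq> s \<longrightarrow> \<not> compat P le r s)"

definition maximal_antichain_below ::
  "'p set \<Rightarrow> ('p \<Rightarrow> 'p \<Rightarrow> bool) \<Rightarrow> 'p \<Rightarrow> 'p set \<Rightarrow> bool" where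
  "maximal_antichain_below P le p A \<longleftrightarrow>
     antichain_below P le p A \<and>
     (\<forall>q\<in>P. le q p \<longrightarrow> (\<exists>r\<in>A. compat P le q r))"

text \<open>A nice name, below the condition p, for a function from N to L: for every
  alpha in N a maximal antichain A alpha below p whose members r are labelled with the
  value lab alpha r in L that r forces for the function at alpha.  Every name that p
  forces to be a function from N to L is equivalent below p to such a nice name.\<close>
definition nice_fun_name ::
  "'p set \<Rightarrow> ('p \<Rightarrow> 'p \<Rightarrow> bool) \<Rightarrow> 'p \<Rightarrow> 'n set \<Rightarrow> 'l set
     \<Rightarrow> ('n \<Rightarrow> 'p set) \<Rightarrow> ('n \<Rightarrow> 'p \<Rightarrow> 'l) \<Rightarrow> bool" where
  "nice_fun_name P le p N L A lab \<longleftrightarrow>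
     (\<forall>\<alpha>\<in>N. maximal_antichain_below P le p (A \<alpha>) \<and> (\<forall>r\<in>A \<alpha>. lab \<alpha> r \<in> L))"

definition forces_fun_eq ::
  "'p set \<Rightarrow> ('p \<Rightarrow> 'p \<Rightarrow> bool) \<Rightarrow> 'p \<Rightarrow> 'n set
     \<Rightarrow> ('n \<Rightarrow> 'p set) \<Rightarrow> ('n \<Rightarrow> 'p \<Rightarrow> 'l) \<Rightarrow> ('n \<Rightarrow> 'l) \<Rightarrow> bool" where
  "forces_fun_eq P le q N A lab g \<longleftrightarrow>
     (\<forall>\<alpha>\<in>N. \<forall>r\<in>A \<alpha>. compat P le q r \<longrightarrow> lab \<alpha> r = g \<alpha>)"

definition adds_no_new_functions ::
  "'p set \<Rightarrow> ('p \<Rightarrow> 'p \<Rightarrow> bool) \<Rightarrow> 'n set \<Rightarrow> 'l set \<Rightarrow> bool" where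
  "adds_no_new_functions P le N L \<longleftrightarrow>
     (\<forall>p\<in>P. \<forall>A lab. nice_fun_name P le p N L A lab \<longrightarrow>
        (\<exists>q\<in>P. le q p \<and> (\<exists>g. (\<forall>\<alpha>\<in>N. g \<alpha> \<in> L) \<and> forces_fun_eq P le q N A lab g)))"

end

theory Submission
  imports Defs
begin

text \<open>Let p = [P] force a function from N into Pow N, described by nice names (A \<alpha>, lab \<alpha>).
  Completeness of P(\<kappa>)/I provides, for each \<alpha> and each value l, a representative B \<alpha> l of
  the supremum of the conditions of A \<alpha> labelled l.  Maximality of A \<alpha> puts almost every
  point of P into some B \<alpha> l, and since A \<alpha> is an antichain, a positive subset of B \<alpha> l is
  compatible only with conditions labelled l.  Choosing for each point x of P labels
  \<alpha> \<mapsto> l with x \<in> B \<alpha> l partitions P into at most 2^(\<nu>\<times>\<nu>) = 2^\<nu> < \<kappa> pieces, so by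
  \<kappa>-completeness some piece C is positive, and [C] decides the whole function.\<close>

unbundle cardinal_syntax

lemma card_of_finite_ordLess_infinite:
  assumes "finite A" "infinite K"
  shows "|A| <o |K|"
  using assms
  by (intro finite_ordLess_infinite[OF card_of_Well_order card_of_Well_order])
     (simp_all add: Field_card_of)

lemma card_of_Pow_Times_self_ordLess:
  assumes "infinite K" and "|Pow N| <o |K|"
  shows "|Pow (N \<times> N)| <o |K|"
proof (cases "finite N")
  case True
  then have "finite (Pow (N \<times> N))" by simp
  then show ?thesis by (rule card_of_finite_ordLess_infinite[OF _ assms(1)])
next
  case False
  then have "|N \<times> N| =o |N|" by (rule card_of_Times_same_infinite)
  then obtain f where "bij_betw f (N \<times> N) N" using card_of_ordIso by blast
  then have "bij_betw ((`) f) (Pow (N \<times> N)) (Pow N)" by (rule bij_betw_Pow)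
  then have "|Pow (N \<times> N)| =o |Pow N|" using card_of_ordIso by blast
  then show ?thesis by (rule ordIso_ordLess_trans[OF _ assms(2)])
qed

lemma card_of_ordLess_of_Pow_ordLess:
  "|Pow N| <o |K| \<Longrightarrow> |N| <o |K|"
  using ordLess_transitive[OF card_of_Pow] .

lemma quot_alg_iff: "a \<in> quot_alg K I \<longleftrightarrow> (\<exists>X\<subseteq>K. a = cls K I X)"
  unfolding quot_alg_def quotient_def cls_def by auto

lemma antichain_below_subset: "antichain_below P le p A \<Longrightarrow> A \<subseteq> P"
  unfolding antichain_below_def by blast

lemma maximal_antichain_below_subset: "maximal_antichain_below P le p A \<Longrightarrow> A \<subseteq> P"
  unfolding maximal_antichain_below_def antichain_below_def by blast

locale ideal_quotient =
  fixes K :: "'a set" and I :: "'a set set"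
  assumes ideal_over: "ideal_over K I"
    and infinite_K: "infinite K"
begin

lemma ideal_subset:
  assumes "X \<in> I" "Y \<subseteq> X"
  shows "Y \<in> I"
proof -
  have "\<forall>X\<in>I. \<forall>Y. Y \<subseteq> X \<longrightarrow> Y \<in> I"
    using ideal_over unfolding ideal_over_def by (elim conjE)
  then show ?thesis using assms by blast
qed

lemma ideal_Union:
  assumes "F \<subseteq> I" "|F| <o |K|"
  shows "\<Union>F \<in> I"
proof -
  have "\<forall>F. F \<subseteq> I \<and> |F| <o |K| \<longrightarrow> \<Union>F \<in> I"
    using ideal_over unfolding ideal_over_def by (elim conjE)
  then show ?thesis using assms by blast
qed

lemma ideal_UN:
  assumes "|J| <o |K|" and "\<And>j. j \<in> J \<Longrightarrow> h j \<in> I"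
  shows "(\<Union>j\<in>J. h j) \<in> I"
proof (rule ideal_Union)
  show "h ` J \<subseteq> I" using assms(2) by blast
  show "|h ` J| <o |K|" by (rule ordLeq_ordLess_trans[OF card_of_image assms(1)])
qed

lemma ideal_Un:
  assumes "X \<in> I" "Y \<in> I"
  shows "X \<union> Y \<in> I"
proof -
  have "|{X, Y}| <o |K|" by (simp add: card_of_finite_ordLess_infinite infinite_K)
  then have "(\<Union>Z\<in>{X, Y}. Z) \<in> I" by (rule ideal_UN) (use assms in blast)
  then show ?thesis by simp
qed

lemma empty_in_ideal: "{} \<in> I"
proof -
  obtain x where "x \<in> K" using infinite_K by fastforce
  moreover have "\<forall>x\<in>K. {x} \<in> I"
    using ideal_over unfolding ideal_over_def by (elim conjE)
  ultimately have "{x} \<in> I" by blast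
  then show ?thesis by (rule ideal_subset) simp
qed

lemma ideal_positive_fibre:
  assumes "X \<notin> I" and "f ` X \<subseteq> Y" and "|Y| <o |K|"
  shows "\<exists>y\<in>Y. {x\<in>X. f x = y} \<notin> I"
proof (rule ccontr)
  assume "\<not> ?thesis"
  then have "\<And>y. y \<in> Y \<Longrightarrow> {x\<in>X. f x = y} \<in> I" by blast
  then have "(\<Union>y\<in>Y. {x\<in>X. f x = y}) \<in> I" by (rule ideal_UN[OF assms(3)])
  moreover have "(\<Union>y\<in>Y. {x\<in>X. f x = y}) = X" using assms(2) by blast
  ultimately show False using assms(1) by simp
qed

lemma equiv_eqI: "equiv (Pow K) (eqI K I)"
proof (rule equivI)
  show "eqI K I \<subseteq> Pow K \<times> Pow K" unfolding eqI_def by blast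
  show "refl_on (Pow K) (eqI K I)"
    using empty_in_ideal unfolding eqI_def refl_on_def by auto
  show "sym (eqI K I)" unfolding eqI_def sym_def by blast
  show "trans (eqI K I)"
  proof (rule transI)
    fix X Y Z assume "(X, Y) \<in> eqI K I" "(Y, Z) \<in> eqI K I"
    then have "X \<subseteq> K" "Z \<subseteq> K"
      and XZ: "(X - Y) \<union> (Y - Z) \<in> I" and ZX: "(Z - Y) \<union> (Y - X) \<in> I"
      unfolding eqI_def by (simp_all add: ideal_Un)
    moreover have "X - Z \<in> I" by (rule ideal_subset[OF XZ]) blast
    moreover have "Z - X \<in> I" by (rule ideal_subset[OF ZX]) blast
    ultimately show "(X, Z) \<in> eqI K I" unfolding eqI_def by simp
  qed
qed

lemma cls_eq_iff:
  assumes "X \<subseteq> K" "Y \<subseteq> K"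
  shows "cls K I X = cls K I Y \<longleftrightarrow> X - Y \<in> I \<and> Y - X \<in> I"
proof -
  have "cls K I X = cls K I Y \<longleftrightarrow> (X, Y) \<in> eqI K I"
    unfolding cls_def using assms by (simp add: eq_equiv_class_iff[OF equiv_eqI])
  then show ?thesis using assms unfolding eqI_def by simp
qed

lemma cls_eq_empty_iff: "X \<subseteq> K \<Longrightarrow> cls K I X = cls K I {} \<longleftrightarrow> X \<in> I"
  using cls_eq_iff[of X "{}"] empty_in_ideal by simp

lemma leI_cls_iff:
  assumes "X \<subseteq> K" "Y \<subseteq> K"
  shows "leI K I (cls K I X) (cls K I Y) \<longleftrightarrow> X - Y \<in> I"
proof
  assume "leI K I (cls K I X) (cls K I Y)"
  then obtain X' Y' where X'Y': "X' \<subseteq> K" "Y' \<subseteq> K" "X' - Y' \<in> I"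
    and "cls K I X = cls K I X'" "cls K I Y = cls K I Y'"
    unfolding leI_def by blast
  then have "X - X' \<in> I" "Y' - Y \<in> I" using cls_eq_iff assms by simp_all
  with X'Y'(3) have "(X - X') \<union> (X' - Y') \<union> (Y' - Y) \<in> I" by (simp add: ideal_Un)
  then show "X - Y \<in> I" by (rule ideal_subset) blast
qed (use assms in \<open>auto simp: leI_def\<close>)

lemma forcing_set_iff:
  "a \<in> forcing_set K I \<longleftrightarrow> (\<exists>X\<subseteq>K. X \<notin> I \<and> a = cls K I X)"
proof
  assume a: "a \<in> forcing_set K I"
  then obtain X where X: "X \<subseteq> K" "a = cls K I X"
    using quot_alg_iff[of a K I] unfolding forcing_set_def by blast
  moreover have "X \<notin> I"
    using a X cls_eq_empty_iff[OF X(1)] unfolding forcing_set_def by simp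
  ultimately show "\<exists>X\<subseteq>K. X \<notin> I \<and> a = cls K I X" by blast
next
  assume "\<exists>X\<subseteq>K. X \<notin> I \<and> a = cls K I X"
  then obtain X where X: "X \<subseteq> K" "X \<notin> I" "a = cls K I X" by blast
  then have "a \<in> quot_alg K I" using quot_alg_iff[of a K I] by blast
  moreover have "a \<noteq> cls K I {}" using X cls_eq_empty_iff[OF X(1)] by simp
  ultimately show "a \<in> forcing_set K I" unfolding forcing_set_def by simp
qed

lemma compat_cls_iff:
  assumes "X \<subseteq> K" "Y \<subseteq> K"
  shows "compat (forcing_set K I) (leI K I) (cls K I X) (cls K I Y) \<longleftrightarrow> X \<inter> Y \<notin> I"
proof
  assume "compat (forcing_set K I) (leI K I) (cls K I X) (cls K I Y)"
  then obtain r where "r \<in> forcing_set K I" "leI K I r (cls K I X)" "leI K I r (cls K I Y)"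
    unfolding compat_def by blast
  moreover from \<open>r \<in> forcing_set K I\<close> obtain Z where Z: "Z \<subseteq> K" "Z \<notin> I" "r = cls K I Z"
    unfolding forcing_set_iff by blast
  ultimately have "Z - X \<in> I" "Z - Y \<in> I"
    using leI_cls_iff[OF Z(1) assms(1)] leI_cls_iff[OF Z(1) assms(2)] by simp_all
  show "X \<inter> Y \<notin> I"
  proof
    assume "X \<inter> Y \<in> I"
    with \<open>Z - X \<in> I\<close> \<open>Z - Y \<in> I\<close> have "(Z - X) \<union> (Z - Y) \<union> (X \<inter> Y) \<in> I"
      by (simp add: ideal_Un)
    then have "Z \<in> I" by (rule ideal_subset) blast
    with Z(2) show False by contradiction
  qed
next
  assume "X \<inter> Y \<notin> I"
  moreover have XY: "X \<inter> Y \<subseteq> K" using assms by blast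
  ultimately have "cls K I (X \<inter> Y) \<in> forcing_set K I" unfolding forcing_set_iff by blast
  moreover have "X \<inter> Y - X \<in> I" "X \<inter> Y - Y \<in> I"
    by (rule ideal_subset[OF empty_in_ideal], blast)+
  then have "leI K I (cls K I (X \<inter> Y)) (cls K I X)" "leI K I (cls K I (X \<inter> Y)) (cls K I Y)"
    using leI_cls_iff[OF XY assms(1)] leI_cls_iff[OF XY assms(2)] by simp_all
  ultimately show "compat (forcing_set K I) (leI K I) (cls K I X) (cls K I Y)"
    unfolding compat_def by blast
qed

definition represents_Sup :: "'a set set set \<Rightarrow> 'a set \<Rightarrow> bool" where
  "represents_Sup S B \<longleftrightarrow> B \<subseteq> K \<and>
     (\<forall>R\<subseteq>K. cls K I R \<in> S \<longrightarrow> R - B \<in> I) \<and>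
     (\<forall>T\<subseteq>K. (\<forall>R\<subseteq>K. cls K I R \<in> S \<longrightarrow> R - T \<in> I) \<longrightarrow> B - T \<in> I)"

lemma represents_Sup_subset: "represents_Sup S B \<Longrightarrow> B \<subseteq> K"
  unfolding represents_Sup_def by blast

lemma represents_Sup_upper:
  "represents_Sup S B \<Longrightarrow> R \<subseteq> K \<Longrightarrow> cls K I R \<in> S \<Longrightarrow> R - B \<in> I"
  unfolding represents_Sup_def by blast

lemma represents_Sup_least:
  assumes "represents_Sup S B" "T \<subseteq> K"
    and "\<And>R. R \<subseteq> K \<Longrightarrow> cls K I R \<in> S \<Longrightarrow> R - T \<in> I"
  shows "B - T \<in> I"
  using assms unfolding represents_Sup_def by blast

lemma represents_Sup_exists:
  assumes "quot_complete K I" and "S \<subseteq> quot_alg K I"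
  shows "\<exists>B. represents_Sup S B"
proof -
  obtain s where s: "s \<in> quot_alg K I" "\<forall>a\<in>S. leI K I a s"
    "\<forall>t\<in>quot_alg K I. (\<forall>a\<in>S. leI K I a t) \<longrightarrow> leI K I s t"
    using assms(1)[unfolded quot_complete_def, rule_format, OF assms(2)] by blast
  then obtain B where B: "B \<subseteq> K" "s = cls K I B" unfolding quot_alg_iff by blast
  have "R - B \<in> I" if "R \<subseteq> K" "cls K I R \<in> S" for R
    using s(2) that leI_cls_iff[OF that(1) B(1)] B(2) by simp
  moreover have "B - T \<in> I" if T: "T \<subseteq> K" "\<forall>R\<subseteq>K. cls K I R \<in> S \<longrightarrow> R - T \<in> I" for T
  proof -
    have "leI K I a (cls K I T)" if "a \<in> S" for a
    proof -
      obtain R where "R \<subseteq> K" "a = cls K I R"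
        using \<open>a \<in> S\<close> assms(2) quot_alg_iff[of a K I] by blast
      then show ?thesis using T \<open>a \<in> S\<close> leI_cls_iff[OF \<open>R \<subseteq> K\<close> T(1)] by simp
    qed
    moreover have "cls K I T \<in> quot_alg K I" using T(1) quot_alg_iff[of _ K I] by blast
    ultimately have "leI K I s (cls K I T)" using s(3) by blast
    then show ?thesis using leI_cls_iff[OF B(1) T(1)] B(2) by simp
  qed
  ultimately show ?thesis unfolding represents_Sup_def using B(1) by blast
qed

lemma maximal_antichain_covers_mod_ideal:
  assumes max: "maximal_antichain_below (forcing_set K I) (leI K I) (cls K I P) A"
    and "P \<subseteq> K" and lab: "\<forall>r\<in>A. lab r \<in> L"
    and B: "\<And>l. represents_Sup {r\<in>A. lab r = l} (B l)"
  shows "P - (\<Union>l\<in>L. B l) \<in> I"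
proof (rule ccontr)
  define D where "D = P - (\<Union>l\<in>L. B l)"
  assume "D \<notin> I"
  have "D \<subseteq> K" using \<open>P \<subseteq> K\<close> unfolding D_def by blast
  have "D - P \<in> I" by (rule ideal_subset[OF empty_in_ideal]) (auto simp: D_def)
  then have "cls K I D \<in> forcing_set K I" "leI K I (cls K I D) (cls K I P)"
    unfolding forcing_set_iff leI_cls_iff[OF \<open>D \<subseteq> K\<close> \<open>P \<subseteq> K\<close>]
    using \<open>D \<notin> I\<close> \<open>D \<subseteq> K\<close> by blast+
  then obtain r where r: "r \<in> A" "compat (forcing_set K I) (leI K I) (cls K I D) r"
    using max unfolding maximal_antichain_below_def by blast
  have "r \<in> forcing_set K I" using maximal_antichain_below_subset[OF max] r(1) by blast
  then obtain R where R: "R \<subseteq> K" "r = cls K I R" unfolding forcing_set_iff by blast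
  have "D \<inter> R \<notin> I" using r(2) R(2) compat_cls_iff[OF \<open>D \<subseteq> K\<close> R(1)] by simp
  moreover have "D \<inter> R \<in> I"
  proof (rule ideal_subset)
    show "R - B (lab r) \<in> I" using represents_Sup_upper[OF B R(1)] r(1) R(2) by simp
    show "D \<inter> R \<subseteq> R - B (lab r)" using lab r(1) unfolding D_def by blast
  qed
  ultimately show False by contradiction
qed

text \<open>The incompatibility of r with every condition labelled l makes K - R an upper bound
  of those conditions, so their supremum B meets R only in a null set.\<close>
lemma antichain_label_unique:
  assumes anti: "antichain_below (forcing_set K I) (leI K I) p A"
    and B: "represents_Sup {r\<in>A. lab r = l} B"
    and "C \<subseteq> B" "C \<notin> I" "r \<in> A"
    and "compat (forcing_set K I) (leI K I) (cls K I C) r"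
  shows "lab r = l"
proof (rule ccontr)
  assume "lab r \<noteq> l"
  have "r \<in> forcing_set K I" using antichain_below_subset[OF anti] \<open>r \<in> A\<close> by blast
  then obtain R where R: "R \<subseteq> K" "r = cls K I R" unfolding forcing_set_iff by blast
  have "C \<subseteq> K" using represents_Sup_subset[OF B] \<open>C \<subseteq> B\<close> by blast
  then have "C \<inter> R \<notin> I" using assms(6) R compat_cls_iff[OF \<open>C \<subseteq> K\<close> R(1)] by simp
  have "B - (K - R) \<in> I"
  proof (rule represents_Sup_least[OF B Diff_subset])
    fix R' assume R': "R' \<subseteq> K" "cls K I R' \<in> {r\<in>A. lab r = l}"
    then have "cls K I R' \<noteq> r" using \<open>lab r \<noteq> l\<close> by blast
    then have "\<not> compat (forcing_set K I) (leI K I) r (cls K I R')"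
      using anti \<open>r \<in> A\<close> R'(2) unfolding antichain_below_def by blast
    then have "R \<inter> R' \<in> I" using compat_cls_iff[OF R(1) R'(1)] R(2) by simp
    moreover have "R' - (K - R) = R \<inter> R'" using R'(1) by blast
    ultimately show "R' - (K - R) \<in> I" by simp
  qed
  then have "C \<inter> R \<in> I" by (rule ideal_subset) (use \<open>C \<subseteq> B\<close> in blast)
  with \<open>C \<inter> R \<notin> I\<close> show False by contradiction
qed

lemma positive_subset_uniform_choice:
  assumes "X \<notin> I" and "|Pow (N \<times> N)| <o |K|"
    and "\<And>x \<alpha>. x \<in> X \<Longrightarrow> \<alpha> \<in> N \<Longrightarrow> \<exists>l\<in>Pow N. x \<in> B \<alpha> l"
  shows "\<exists>C\<subseteq>X. C \<notin> I \<and> (\<exists>g. \<forall>\<alpha>\<in>N. g \<alpha> \<in> Pow N \<and> C \<subseteq> B \<alpha> (g \<alpha>))"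
proof -
  define sel where "sel x \<alpha> = (SOME l. l \<in> Pow N \<and> x \<in> B \<alpha> l)" for x \<alpha>
  have sel: "sel x \<alpha> \<in> Pow N \<and> x \<in> B \<alpha> (sel x \<alpha>)" if "x \<in> X" "\<alpha> \<in> N" for x \<alpha>
    unfolding sel_def by (rule someI_ex) (use assms(3)[OF that] in blast)
  \<comment> \<open>a choice of labels \<alpha> \<mapsto> sel x \<alpha> is coded by the subset SIGMA \<alpha>:N. sel x \<alpha> of N \<times> N\<close>
  have "(\<lambda>x. SIGMA \<alpha>:N. sel x \<alpha>) ` X \<subseteq> Pow (N \<times> N)" using sel by blast
  from ideal_positive_fibre[OF assms(1) this assms(2)]
  obtain G where C: "{x\<in>X. (SIGMA \<alpha>:N. sel x \<alpha>) = G} \<notin> I" (is "?C \<notin> I") by blast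
  then have "?C \<noteq> {}" using empty_in_ideal by metis
  then obtain x0 where x0: "x0 \<in> ?C" by blast
  have sel_eq: "sel x \<alpha> = sel x0 \<alpha>" if "x \<in> ?C" "\<alpha> \<in> N" for x \<alpha>
  proof -
    have "sel x \<alpha> = {\<beta>. (\<alpha>, \<beta>) \<in> (SIGMA \<alpha>:N. sel x \<alpha>)}" using \<open>\<alpha> \<in> N\<close> by blast
    also have "\<dots> = sel x0 \<alpha>" using that x0 by auto
    finally show ?thesis .
  qed
  have "sel x0 \<alpha> \<in> Pow N \<and> ?C \<subseteq> B \<alpha> (sel x0 \<alpha>)" if "\<alpha> \<in> N" for \<alpha>
  proof
    show "sel x0 \<alpha> \<in> Pow N" using sel[OF _ that] x0 by blast
    show "?C \<subseteq> B \<alpha> (sel x0 \<alpha>)"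
    proof
      fix x assume "x \<in> ?C"
      then show "x \<in> B \<alpha> (sel x0 \<alpha>)" using sel[OF _ that, of x] sel_eq[OF _ that, of x] by simp
    qed
  qed
  then show ?thesis using C by (intro exI[of _ ?C] conjI exI[of _ "sel x0"]) auto
qed

lemma nice_fun_name_represents_Sup_exists:
  assumes "quot_complete K I" and nice: "nice_fun_name (forcing_set K I) (leI K I) p N L A lab"
  shows "\<exists>B. \<forall>\<alpha>\<in>N. \<forall>l. represents_Sup {r\<in>A \<alpha>. lab \<alpha> r = l} (B \<alpha> l)"
proof -
  define B where "B \<alpha> l = (SOME B. represents_Sup {r\<in>A \<alpha>. lab \<alpha> r = l} B)" for \<alpha> l
  have "represents_Sup {r\<in>A \<alpha>. lab \<alpha> r = l} (B \<alpha> l)" if "\<alpha> \<in> N" for \<alpha> l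
    unfolding B_def
  proof (rule someI_ex, rule represents_Sup_exists[OF assms(1)])
    have "antichain_below (forcing_set K I) (leI K I) p (A \<alpha>)"
      using nice that unfolding nice_fun_name_def maximal_antichain_below_def by blast
    from antichain_below_subset[OF this]
    show "{r\<in>A \<alpha>. lab \<alpha> r = l} \<subseteq> quot_alg K I" unfolding forcing_set_def by blast
  qed
  then show ?thesis by (intro exI[of _ B]) blast
qed

lemma nice_fun_name_covers_mod_ideal:
  assumes "|N| <o |K|" and "P \<subseteq> K"
    and nice: "nice_fun_name (forcing_set K I) (leI K I) (cls K I P) N L A lab"
    and B: "\<And>\<alpha> l. \<alpha> \<in> N \<Longrightarrow> represents_Sup {r\<in>A \<alpha>. lab \<alpha> r = l} (B \<alpha> l)"
  shows "(\<Union>\<alpha>\<in>N. P - (\<Union>l\<in>L. B \<alpha> l)) \<in> I"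
proof (rule ideal_UN[OF assms(1)])
  fix \<alpha> assume "\<alpha> \<in> N"
  then have "maximal_antichain_below (forcing_set K I) (leI K I) (cls K I P) (A \<alpha>)"
    and "\<forall>r\<in>A \<alpha>. lab \<alpha> r \<in> L"
    using nice unfolding nice_fun_name_def by auto
  from maximal_antichain_covers_mod_ideal[OF this(1) \<open>P \<subseteq> K\<close> this(2) B[OF \<open>\<alpha> \<in> N\<close>]]
  show "P - (\<Union>l\<in>L. B \<alpha> l) \<in> I" .
qed

lemma nice_fun_name_forced_value:
  assumes nice: "nice_fun_name (forcing_set K I) (leI K I) p N L A lab"
    and B: "\<And>\<alpha> l. \<alpha> \<in> N \<Longrightarrow> represents_Sup {r\<in>A \<alpha>. lab \<alpha> r = l} (B \<alpha> l)"
    and "C \<notin> I" and C: "\<And>\<alpha>. \<alpha> \<in> N \<Longrightarrow> C \<subseteq> B \<alpha> (g \<alpha>)"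
  shows "forces_fun_eq (forcing_set K I) (leI K I) (cls K I C) N A lab g"
  unfolding forces_fun_eq_def
proof (intro ballI impI)
  fix \<alpha> r
  assume \<alpha>: "\<alpha> \<in> N" and r: "r \<in> A \<alpha>" "compat (forcing_set K I) (leI K I) (cls K I C) r"
  have "antichain_below (forcing_set K I) (leI K I) p (A \<alpha>)"
    using nice \<alpha> unfolding nice_fun_name_def maximal_antichain_below_def by blast
  from antichain_label_unique[OF this B[OF \<alpha>] C[OF \<alpha>] \<open>C \<notin> I\<close> r]
  show "lab \<alpha> r = g \<alpha>" .
qed

lemma nice_fun_name_decided:
  assumes complete: "quot_complete K I" and small: "|Pow N| <o |K|"
    and "p \<in> forcing_set K I" and nice: "nice_fun_name (forcing_set K I) (leI K I) p N (Pow N) A lab"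
  shows "\<exists>q\<in>forcing_set K I. leI K I q p \<and>
    (\<exists>g. (\<forall>\<alpha>\<in>N. g \<alpha> \<in> Pow N) \<and> forces_fun_eq (forcing_set K I) (leI K I) q N A lab g)"
proof -
  obtain P where P: "P \<subseteq> K" "P \<notin> I" "p = cls K I P"
    using \<open>p \<in> forcing_set K I\<close> unfolding forcing_set_iff by blast
  obtain B where B: "\<And>\<alpha> l. \<alpha> \<in> N \<Longrightarrow> represents_Sup {r\<in>A \<alpha>. lab \<alpha> r = l} (B \<alpha> l)"
    using nice_fun_name_represents_Sup_exists[OF complete nice] by blast
  define E where "E = (\<Union>\<alpha>\<in>N. P - (\<Union>l\<in>Pow N. B \<alpha> l))"
  have "E \<in> I" unfolding E_def
    using card_of_ordLess_of_Pow_ordLess[OF small] P(1) nice[unfolded P(3)] B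
    by (rule nice_fun_name_covers_mod_ideal)
  have "P - E \<notin> I"
  proof
    assume "P - E \<in> I"
    then have "(P - E) \<union> E \<in> I" using \<open>E \<in> I\<close> by (rule ideal_Un)
    then have "P \<in> I" by (rule ideal_subset) blast
    with P(2) show False by contradiction
  qed
  moreover have "|Pow (N \<times> N)| <o |K|" by (rule card_of_Pow_Times_self_ordLess[OF infinite_K small])
  moreover have "\<exists>l\<in>Pow N. x \<in> B \<alpha> l" if "x \<in> P - E" "\<alpha> \<in> N" for x \<alpha>
    using that unfolding E_def by blast
  ultimately have "\<exists>C\<subseteq>P - E. C \<notin> I \<and> (\<exists>g. \<forall>\<alpha>\<in>N. g \<alpha> \<in> Pow N \<and> C \<subseteq> B \<alpha> (g \<alpha>))"
    by (rule positive_subset_uniform_choice)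
  then obtain C g where C: "C \<subseteq> P - E" "C \<notin> I"
    and g: "\<forall>\<alpha>\<in>N. g \<alpha> \<in> Pow N \<and> C \<subseteq> B \<alpha> (g \<alpha>)"
    by blast
  have C_sub: "\<And>\<alpha>. \<alpha> \<in> N \<Longrightarrow> C \<subseteq> B \<alpha> (g \<alpha>)" using g by blast
  have "C \<subseteq> K" using C(1) P(1) by blast
  have "C - P \<in> I" by (rule ideal_subset[OF empty_in_ideal]) (use C(1) in blast)
  then have "cls K I C \<in> forcing_set K I" "leI K I (cls K I C) p"
    unfolding forcing_set_iff P(3) leI_cls_iff[OF \<open>C \<subseteq> K\<close> P(1)]
    using C(2) \<open>C \<subseteq> K\<close> by blast+
  moreover have "\<forall>\<alpha>\<in>N. g \<alpha> \<in> Pow N" using g by blast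
  moreover have "forces_fun_eq (forcing_set K I) (leI K I) (cls K I C) N A lab g"
    by (rule nice_fun_name_forced_value[OF nice B C(2) C_sub])
  ultimately show ?thesis by blast
qed

end

theorem proposition1p4:
  fixes K :: "'a set" and I :: "'a set set" and N :: "'b set"
  assumes "\<not> countable K"
    and "ideal_over K I"
    and "quot_complete K I"
    and "(card_of (Pow N), card_of K) \<in> ordLess"
  shows "adds_no_new_functions (forcing_set K I) (leI K I) N (Pow N)"
proof -
  interpret ideal_quotient K I
    using assms(1,2) countable_finite by unfold_locales blast+
  show ?thesis
    unfolding adds_no_new_functions_def
    by (intro ballI allI impI nice_fun_name_decided[OF assms(3,4)])
qed

end
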